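(* Let $\mathcal H$ be a separable complex Hilbert space, $A\in L(\mathcal H)^+$, and $B\in L(\mathcal H)$ with closed range such that $(A,R(B))$ is compatible. Let $y\in\mathcal H$, $y\ne0$. Then $u\in\mathcal H$ is an $A$-least squares solution of $Bx=y$ if and only if there exists $T\in\Pi(A,R(B))$ with $Bu=Ty$.
   Context: $\|z\|_A=\langle Az,z\rangle^{1/2}$. $u$ is an $A$-least squares solution of $Bx=y$ if $\|y-Bu\|_A\le\|y-Bx\|_A$ for all $x\in\mathcal H$. $(A,\mathcal S)$ is compatible if there exists $Q\in L(\mathcal H)$ with $Q^2=Q$, $R(Q)=\mathcal S$, $AQ=Q^*A$. $\Pi(A,\mathcal S)$ is the set of $T\in L(\mathcal H)$ with $R(T)\subseteq\mathcal S$ and $\|w-Tw\|_A\le\|w-s\|_A$ for all $w\in\mathcal H$, $s\in\mathcal S$. *)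

theory Defs
  imports "HOL-Analysis.Analysis" "HOL-Library.Complex_Order"
begin

text \<open>HOL-Analysis has no complex inner product spaces, so we introduce them as a type class:
  a real normed vector space with a compatible complex scalar multiplication and a complex
  inner product (conjugate-linear in the first argument) inducing the norm.\<close>

class complex_inner = real_normed_vector +
  fixes scaleC :: "complex \<Rightarrow> 'a \<Rightarrow> 'a" (infixr "*\<^sub>C" 75)
    and cinner :: "'a \<Rightarrow> 'a \<Rightarrow> complex"
  assumes scaleC_add_right: "a *\<^sub>C (x + y) = a *\<^sub>C x + a *\<^sub>C y"
    and scaleC_add_left: "(a + b) *\<^sub>C x = a *\<^sub>C x + b *\<^sub>C x"
    and scaleC_scaleC: "a *\<^sub>C (b *\<^sub>C x) = (a * b) *\<^sub>C x"
    and scaleC_one: "1 *\<^sub>C x = x"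
    and scaleR_scaleC: "r *\<^sub>R x = complex_of_real r *\<^sub>C x"
    and cinner_add_left: "cinner (x + y) z = cinner x z + cinner y z"
    and cinner_scaleC_left: "cinner (a *\<^sub>C x) y = cnj a * cinner x y"
    and cinner_commute: "cinner x y = cnj (cinner y x)"
    and cinner_ge_zero: "0 \<le> cinner x x"
    and cinner_eq_zero_iff: "cinner x x = 0 \<longleftrightarrow> x = 0"
    and norm_eq_sqrt_cinner: "norm x = sqrt (Re (cinner x x))"

class chilbert_space = complex_inner + complete_space

definition separable_type :: "'a::topological_space itself \<Rightarrow> bool" where
  "separable_type _ \<longleftrightarrow> (\<exists>D::'a set. countable D \<and> closure D = UNIV)"

definition bounded_clinear :: "('a::complex_inner \<Rightarrow> 'b::complex_inner) \<Rightarrow> bool" where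
  "bounded_clinear f \<longleftrightarrow>
     (\<forall>x y. f (x + y) = f x + f y) \<and> (\<forall>c x. f (c *\<^sub>C x) = c *\<^sub>C f x) \<and>
     (\<exists>K. \<forall>x. norm (f x) \<le> norm x * K)"

definition cadjoint :: "('a::complex_inner \<Rightarrow> 'a) \<Rightarrow> ('a \<Rightarrow> 'a)" where
  "cadjoint T = (THE S. \<forall>x y. cinner (T x) y = cinner x (S y))"

definition positive_op :: "('a::complex_inner \<Rightarrow> 'a) \<Rightarrow> bool" where
  "positive_op A \<longleftrightarrow> bounded_clinear A \<and> (\<forall>z. 0 \<le> cinner (A z) z)"

definition anorm :: "('a::complex_inner \<Rightarrow> 'a) \<Rightarrow> 'a \<Rightarrow> real" where
  "anorm A z = sqrt (Re (cinner (A z) z))"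

definition A_least_squares :: "('a::complex_inner \<Rightarrow> 'a) \<Rightarrow> ('a \<Rightarrow> 'a) \<Rightarrow> 'a \<Rightarrow> 'a \<Rightarrow> bool" where
  "A_least_squares A B y u \<longleftrightarrow> (\<forall>x. anorm A (y - B u) \<le> anorm A (y - B x))"

definition compatible :: "('a::complex_inner \<Rightarrow> 'a) \<Rightarrow> 'a set \<Rightarrow> bool" where
  "compatible A S \<longleftrightarrow>
     (\<exists>Q. bounded_clinear Q \<and> Q \<circ> Q = Q \<and> range Q = S \<and> A \<circ> Q = cadjoint Q \<circ> A)"

definition PiA :: "('a::complex_inner \<Rightarrow> 'a) \<Rightarrow> 'a set \<Rightarrow> ('a \<Rightarrow> 'a) set" where
  "PiA A S = {T. bounded_clinear T \<and> range T \<subseteq> S \<and>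
                 (\<forall>w s. s \<in> S \<longrightarrow> anorm A (w - T w) \<le> anorm A (w - s))}"

end

theory Submission
  imports Defs
begin

text \<open>
  Take the compatible projection \<open>Q\<close> onto \<open>R(B)\<close>: it is \<open>A\<close>-selfadjoint, so \<open>w - Q w\<close> is
  \<open>A\<close>-orthogonal to \<open>R(B)\<close> and \<open>Q\<close> itself lies in \<open>\<Pi>(A, R(B))\<close>. If \<open>u\<close> is an \<open>A\<close>-least
  squares solution, then \<open>t = Q y - B u\<close> has \<open>\<langle>A t, t\<rangle> = 0\<close>, so the rank-one perturbation
  \<open>T w = Q w - \<langle>y', w\<rangle> t\<close>, with \<open>\<langle>y', y\<rangle> = 1\<close>, is still \<open>A\<close>-closest to every \<open>w\<close> and maps \<open>y\<close>
  to \<open>B u\<close>. The only analytic input is that \<open>Q\<close> has an adjoint, which comes from the Riesz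
  representation theorem, proved via nearest points in closed subspaces.
\<close>

lemma cinner_zero_left [simp]: "cinner 0 x = 0"
  using cinner_add_left[of 0 0 x] by simp

lemma cinner_add_right: "cinner x (y + z) = cinner x y + cinner x z"
  by (metis cinner_add_left cinner_commute complex_cnj_add)

lemma cinner_scaleC_right: "cinner x (a *\<^sub>C y) = a * cinner x y"
  by (metis cinner_scaleC_left cinner_commute complex_cnj_cnj complex_cnj_mult)

lemma cinner_zero_right [simp]: "cinner x 0 = 0"
  by (metis cinner_commute cinner_zero_left complex_cnj_zero)

lemma cinner_diff_left: "cinner (x - y) z = cinner x z - cinner y z"
  using cinner_add_left[of "x - y" y z] by simp

lemma cinner_diff_right: "cinner x (y - z) = cinner x y - cinner x z"
  using cinner_add_right[of x "y - z" z] by simp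

lemma scaleC_zero_right [simp]: "a *\<^sub>C 0 = 0"
  using scaleC_add_right[of a 0 0] by simp

lemma scaleC_diff_right: "a *\<^sub>C (x - y) = a *\<^sub>C x - a *\<^sub>C y"
  using scaleC_add_right[of a "x - y" y] by simp

lemma cinner_self_eq_norm_square: "cinner x x = complex_of_real ((norm x)\<^sup>2)"
proof -
  have "Im (cinner x x) = 0" "Re (cinner x x) \<ge> 0"
    using cinner_ge_zero[of x] by (auto simp: less_eq_complex_def)
  moreover have "(norm x)\<^sup>2 = Re (cinner x x)"
    using norm_eq_sqrt_cinner[of x] \<open>Re (cinner x x) \<ge> 0\<close> by simp
  ultimately show ?thesis by (simp add: complex_eq_iff)
qed

lemma norm_scaleC: "norm (a *\<^sub>C x) = cmod a * norm x"
proof -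
  have "cinner (a *\<^sub>C x) (a *\<^sub>C x) = cnj a * a * cinner x x"
    by (simp add: cinner_scaleC_left cinner_scaleC_right)
  also have "\<dots> = complex_of_real ((cmod a * norm x)\<^sup>2)"
    by (simp add: cinner_self_eq_norm_square power_mult_distrib mult.commute flip: complex_norm_square)
  finally have "(norm (a *\<^sub>C x))\<^sup>2 = (cmod a * norm x)\<^sup>2"
    by (simp only: cinner_self_eq_norm_square of_real_eq_iff)
  thus ?thesis by (simp add: power2_eq_iff_nonneg)
qed

lemma norm_diff_projection_line_square:
  assumes "m \<noteq> 0"
  shows "(norm (v - (cinner m v / cinner m m) *\<^sub>C m))\<^sup>2
           = (norm v)\<^sup>2 - (cmod (cinner m v))\<^sup>2 / (norm m)\<^sup>2"
proof -
  define p r where "p = cinner m v" and "r = (norm m)\<^sup>2"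
  define t where "t = p / complex_of_real r"
  have "r \<noteq> 0" using assms by (simp add: r_def)
  have mm: "cinner m m = complex_of_real r" by (simp add: r_def cinner_self_eq_norm_square)
  have vm: "cinner v m = cnj p" by (simp add: p_def flip: cinner_commute)
  have pp: "p * cnj p = complex_of_real ((cmod p)\<^sup>2)"
    by (metis complex_norm_square of_real_power)
  have "cinner (v - t *\<^sub>C m) (v - t *\<^sub>C m)
        = cinner v v - t * cnj p - cnj t * p + cnj t * t * complex_of_real r"
    by (simp add: cinner_diff_left cinner_diff_right cinner_scaleC_left cinner_scaleC_right
        mm vm p_def algebra_simps)
  also have "\<dots> = complex_of_real ((norm v)\<^sup>2 - (cmod p)\<^sup>2 / r)"
    using \<open>r \<noteq> 0\<close> pp by (simp add: t_def cinner_self_eq_norm_square field_simps)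
  finally show ?thesis
    by (simp only: cinner_self_eq_norm_square of_real_eq_iff t_def mm p_def r_def)
qed

lemma cinner_Cauchy_Schwarz: "cmod (cinner x y) \<le> norm x * norm y"
proof (cases "x = 0")
  case False
  have "(cmod (cinner x y))\<^sup>2 / (norm x)\<^sup>2 \<le> (norm y)\<^sup>2"
    using norm_diff_projection_line_square[OF False, of y]
    by (metis diff_ge_0_iff_ge zero_le_power2)
  hence "(cmod (cinner x y))\<^sup>2 \<le> (norm x * norm y)\<^sup>2"
    using False by (simp add: divide_le_eq power_mult_distrib mult.commute)
  thus ?thesis by (simp add: power2_le_iff_abs_le)
qed simp

lemma cinner_eq_zero_if_nearest:
  assumes "\<And>t. norm v \<le> norm (v - t *\<^sub>C m)"
  shows "cinner m v = 0"
proof (cases "m = 0")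
  case False
  have "(norm v)\<^sup>2 \<le> (norm (v - (cinner m v / cinner m m) *\<^sub>C m))\<^sup>2"
    using assms by (simp add: power_mono)
  hence "(cmod (cinner m v))\<^sup>2 / (norm m)\<^sup>2 \<le> 0"
    using norm_diff_projection_line_square[OF False, of v] by linarith
  thus ?thesis using False by (simp add: divide_le_eq)
qed simp

lemma cinner_parallelogram_law:
  "(norm (a + b))\<^sup>2 + (norm (a - b))\<^sup>2 = 2 * (norm a)\<^sup>2 + 2 * (norm (b :: 'a::complex_inner))\<^sup>2"
proof -
  have "cinner (a + b) (a + b) + cinner (a - b) (a - b) = 2 * cinner a a + 2 * cinner b b"
    by (simp add: cinner_add_left cinner_add_right cinner_diff_left cinner_diff_right algebra_simps)
  hence "complex_of_real ((norm (a + b))\<^sup>2 + (norm (a - b))\<^sup>2)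
         = complex_of_real (2 * (norm a)\<^sup>2 + 2 * (norm b)\<^sup>2)"
    by (simp add: cinner_self_eq_norm_square)
  thus ?thesis by (simp only: of_real_eq_iff)
qed

lemma bounded_clinear_add: "bounded_clinear f \<Longrightarrow> f (x + y) = f x + f y"
  unfolding bounded_clinear_def by blast

lemma bounded_clinear_scaleC: "bounded_clinear f \<Longrightarrow> f (c *\<^sub>C x) = c *\<^sub>C f x"
  unfolding bounded_clinear_def by blast

lemma bounded_clinear_diff: "bounded_clinear f \<Longrightarrow> f (x - y) = f x - f y"
  using bounded_clinear_add[of f "x - y" y] by simp

lemma bounded_clinear_minus_rank_one:
  assumes "bounded_clinear Q"
  shows "bounded_clinear (\<lambda>w. Q w - cinner z w *\<^sub>C t)"
  unfolding bounded_clinear_def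
proof (intro conjI allI)
  fix x y
  show "Q (x + y) - cinner z (x + y) *\<^sub>C t = (Q x - cinner z x *\<^sub>C t) + (Q y - cinner z y *\<^sub>C t)"
    by (simp add: bounded_clinear_add[OF assms] cinner_add_right scaleC_add_left)
next
  fix c x
  show "Q (c *\<^sub>C x) - cinner z (c *\<^sub>C x) *\<^sub>C t = c *\<^sub>C (Q x - cinner z x *\<^sub>C t)"
    by (simp add: bounded_clinear_scaleC[OF assms] cinner_scaleC_right scaleC_diff_right scaleC_scaleC)
next
  obtain K where "\<And>x. norm (Q x) \<le> norm x * K"
    using assms unfolding bounded_clinear_def by blast
  have "norm (Q x - cinner z x *\<^sub>C t) \<le> norm x * (K + norm z * norm t)" for x
  proof -
    have "norm (Q x - cinner z x *\<^sub>C t) \<le> norm (Q x) + cmod (cinner z x) * norm t"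
      using norm_triangle_ineq4[of "Q x" "cinner z x *\<^sub>C t"] by (simp add: norm_scaleC)
    also have "\<dots> \<le> norm x * K + norm z * norm x * norm t"
      using \<open>norm (Q x) \<le> norm x * K\<close> cinner_Cauchy_Schwarz[of z x]
      by (intro add_mono mult_right_mono) auto
    finally show ?thesis by (simp add: algebra_simps)
  qed
  thus "\<exists>K. \<forall>x. norm (Q x - cinner z x *\<^sub>C t) \<le> norm x * K" by blast
qed

section \<open>Nearest points and the Riesz representation theorem\<close>

lemma minimizing_sequence_Cauchy:
  fixes s :: "nat \<Rightarrow> 'a::complex_inner"
  assumes mid: "\<And>j k. (1/2) *\<^sub>R (s j + s k) \<in> N"
    and lower: "\<And>n. n \<in> N \<Longrightarrow> D \<le> norm (w - n)"
    and lim: "(\<lambda>k. norm (w - s k)) \<longlonglongrightarrow> D"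
  shows "Cauchy s"
proof (rule CauchyI)
  fix \<epsilon> :: real
  assume "0 < \<epsilon>"
  define a where "a k = (norm (w - s k))\<^sup>2 - D\<^sup>2" for k
  have "a \<longlonglongrightarrow> D\<^sup>2 - D\<^sup>2"
    unfolding a_def by (intro tendsto_intros lim)
  hence "\<forall>\<^sub>F k in sequentially. a k < \<epsilon>\<^sup>2 / 4"
    using \<open>0 < \<epsilon>\<close> by (intro order_tendstoD(2)) auto
  then obtain M where M: "\<And>k. k \<ge> M \<Longrightarrow> a k < \<epsilon>\<^sup>2 / 4"
    unfolding eventually_sequentially by blast
  have "0 \<le> D"
    by (intro LIMSEQ_le_const[OF lim]) auto
  have "norm (s j - s k) < \<epsilon>" if "j \<ge> M" "k \<ge> M" for j k
  proof -
    have "(w - s j) + (w - s k) = 2 *\<^sub>R (w - (1/2) *\<^sub>R (s j + s k))"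
      by (simp add: scaleR_diff_right scaleR_2 algebra_simps)
    hence "2 * D \<le> norm ((w - s j) + (w - s k))"
      using lower[OF mid[of j k]] by simp
    hence "4 * D\<^sup>2 \<le> (norm ((w - s j) + (w - s k)))\<^sup>2"
      using \<open>0 \<le> D\<close> power_mono[of "2 * D" _ 2] by (simp add: power_mult_distrib)
    moreover have "(norm ((w - s j) + (w - s k)))\<^sup>2 + (norm (s j - s k))\<^sup>2
                   = 2 * (norm (w - s j))\<^sup>2 + 2 * (norm (w - s k))\<^sup>2"
      using cinner_parallelogram_law[of "w - s j" "w - s k"] by (simp add: norm_minus_commute)
    ultimately have "(norm (s j - s k))\<^sup>2 \<le> 2 * a j + 2 * a k"
      unfolding a_def by (simp add: algebra_simps)
    also have "\<dots> < \<epsilon>\<^sup>2" using M[OF \<open>j \<ge> M\<close>] M[OF \<open>k \<ge> M\<close>] by linarith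
    finally show ?thesis using \<open>0 < \<epsilon>\<close> by (simp add: power_less_imp_less_base)
  qed
  thus "\<exists>M. \<forall>m\<ge>M. \<forall>n\<ge>M. norm (s m - s n) < \<epsilon>" by blast
qed

lemma closed_subspace_nearest_point:
  fixes N :: "'a::chilbert_space set"
  assumes "closed N" "0 \<in> N"
    and add: "\<And>a b. a \<in> N \<Longrightarrow> b \<in> N \<Longrightarrow> a + b \<in> N"
    and scale: "\<And>c a. a \<in> N \<Longrightarrow> c *\<^sub>C a \<in> N"
  obtains n0 where "n0 \<in> N" "\<And>n. n \<in> N \<Longrightarrow> norm (w - n0) \<le> norm (w - n)"
proof -
  define D where "D = Inf ((\<lambda>n. norm (w - n)) ` N)"
  have "bdd_below ((\<lambda>n. norm (w - n)) ` N)"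
    by (rule bdd_belowI[of _ 0]) auto
  hence lower: "D \<le> norm (w - n)" if "n \<in> N" for n
    unfolding D_def using that by (simp add: cInf_lower)
  have "\<exists>n\<in>N. norm (w - n) < D + inverse (real (Suc k))" for k
  proof -
    have "\<exists>r \<in> (\<lambda>n. norm (w - n)) ` N. r < D + inverse (real (Suc k))"
      using \<open>0 \<in> N\<close> by (intro cInf_lessD) (auto simp: D_def)
    thus ?thesis by blast
  qed
  then obtain s where sN: "\<And>k. s k \<in> N"
    and upper: "\<And>k. norm (w - s k) < D + inverse (real (Suc k))"
    by metis
  have lim: "(\<lambda>k. norm (w - s k)) \<longlonglongrightarrow> D"
  proof (rule tendsto_sandwich[where f = "\<lambda>_. D"])
    show "\<forall>\<^sub>F k in sequentially. D \<le> norm (w - s k)" using lower sN by simp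
    show "\<forall>\<^sub>F k in sequentially. norm (w - s k) \<le> D + inverse (real (Suc k))"
      by (intro always_eventually allI less_imp_le upper)
    show "(\<lambda>k. D + inverse (real (Suc k))) \<longlonglongrightarrow> D"
      using tendsto_add[OF tendsto_const LIMSEQ_inverse_real_of_nat, of D] by simp
  qed simp
  have "(1/2) *\<^sub>R (s j + s k) \<in> N" for j k
    using add[OF sN sN] scale by (simp add: scaleR_scaleC)
  hence "Cauchy s" by (rule minimizing_sequence_Cauchy[OF _ lower lim])
  then obtain n0 where "s \<longlonglongrightarrow> n0" by (auto simp: Cauchy_convergent_iff convergent_def)
  hence "n0 \<in> N" by (rule closed_sequentially[OF \<open>closed N\<close> sN])
  moreover have "norm (w - n0) = D"
    using LIMSEQ_unique[OF lim] tendsto_norm[OF tendsto_diff[OF tendsto_const \<open>s \<longlonglongrightarrow> n0\<close>]] by blast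
  ultimately show ?thesis using that lower by simp
qed

lemma closed_subspace_orthogonal_residual:
  fixes N :: "'a::chilbert_space set"
  assumes "closed N" "0 \<in> N"
    and add: "\<And>a b. a \<in> N \<Longrightarrow> b \<in> N \<Longrightarrow> a + b \<in> N"
    and scale: "\<And>c a. a \<in> N \<Longrightarrow> c *\<^sub>C a \<in> N"
  obtains n0 where "n0 \<in> N" "\<And>m. m \<in> N \<Longrightarrow> cinner m (w - n0) = 0"
proof -
  obtain n0 where "n0 \<in> N" and nearest: "\<And>n. n \<in> N \<Longrightarrow> norm (w - n0) \<le> norm (w - n)"
    using closed_subspace_nearest_point[OF assms, of w] by metis
  have "cinner m (w - n0) = 0" if "m \<in> N" for m
  proof (rule cinner_eq_zero_if_nearest)
    fix t
    have "n0 + t *\<^sub>C m \<in> N" using that \<open>n0 \<in> N\<close> by (intro add scale)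
    hence "norm (w - n0) \<le> norm (w - (n0 + t *\<^sub>C m))" by (rule nearest)
    thus "norm (w - n0) \<le> norm (w - n0 - t *\<^sub>C m)" by (simp add: diff_diff_eq)
  qed
  with \<open>n0 \<in> N\<close> show ?thesis using that by blast
qed

theorem complex_Riesz_representation:
  fixes f :: "'a::chilbert_space \<Rightarrow> complex"
  assumes add: "\<And>x y. f (x + y) = f x + f y" and hom: "\<And>c x. f (c *\<^sub>C x) = c * f x"
    and bound: "\<And>x. cmod (f x) \<le> norm x * K"
  obtains z where "\<And>x. f x = cinner z x"
proof (cases "\<forall>x. f x = 0")
  case True
  thus ?thesis using that[of 0] by simp
next
  case False
  then obtain w where "f w \<noteq> 0" by blast
  have f_diff: "f (x - y) = f x - f y" for x y using add[of "x - y" y] by simp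
  have "bounded_linear f"
    using add bound by (intro bounded_linear_intro[of f K]) (simp_all add: scaleR_scaleC hom scaleR_conv_of_real)
  define N where "N = f -` {0}"
  have closed: "closed N"
    unfolding N_def by (intro continuous_closed_vimage closed_singleton linear_continuous_at \<open>bounded_linear f\<close>)
  have "0 \<in> N" using hom[of 0 0] by (simp add: N_def)
  have N_add: "a + b \<in> N" if "a \<in> N" "b \<in> N" for a b using that by (simp add: N_def add)
  have N_scaleC: "c *\<^sub>C a \<in> N" if "a \<in> N" for c a using that by (simp add: N_def hom)
  obtain n0 where "n0 \<in> N" and orth_residual: "\<And>m. m \<in> N \<Longrightarrow> cinner m (w - n0) = 0"
    using closed_subspace_orthogonal_residual[OF closed \<open>0 \<in> N\<close> N_add N_scaleC, of w] by metis
  define v where "v = w - n0"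
  have orth: "cinner m v = 0" if "m \<in> N" for m
    using orth_residual[OF that] by (simp add: v_def)
  have "f v = f w" using \<open>n0 \<in> N\<close> by (simp add: v_def f_diff N_def)
  moreover have "f 0 = 0" using hom[of 0 0] by simp
  ultimately have "cinner v v \<noteq> 0" using \<open>f w \<noteq> 0\<close> cinner_eq_zero_iff by metis
  show ?thesis
  proof (rule that)
    fix x
    define c where "c = f x / f v"
    have "cinner (x - c *\<^sub>C v) v = 0"
      using \<open>f v = f w\<close> \<open>f w \<noteq> 0\<close> by (intro orth) (simp add: N_def f_diff hom c_def)
    hence "cinner x v = cnj c * cinner v v"
      by (simp add: cinner_diff_left cinner_scaleC_left)
    hence "cinner v x = c * cinner v v"
      using cinner_commute[of v x] cinner_commute[of v v, symmetric] by simp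
    hence "f x = (f v / cinner v v) * cinner v x"
      using \<open>cinner v v \<noteq> 0\<close> \<open>f v = f w\<close> \<open>f w \<noteq> 0\<close> by (simp add: c_def field_simps)
    thus "f x = cinner (cnj (f v / cinner v v) *\<^sub>C v) x" by (simp add: cinner_scaleC_left)
  qed
qed

lemma cinner_cadjoint:
  fixes Q :: "'a::chilbert_space \<Rightarrow> 'a"
  assumes "bounded_clinear Q"
  shows "cinner (Q x) y = cinner x (cadjoint Q y)"
proof -
  obtain K where K: "\<And>x. norm (Q x) \<le> norm x * K"
    using assms unfolding bounded_clinear_def by blast
  have "\<exists>z. \<forall>x. cinner y (Q x) = cinner z x" for y
  proof -
    have "cmod (cinner y (Q x)) \<le> norm x * (norm y * K)" for x
      using cinner_Cauchy_Schwarz[of y "Q x"] mult_left_mono[OF K[of x], of "norm y"]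
      by (simp add: algebra_simps)
    moreover have "cinner y (Q (a + b)) = cinner y (Q a) + cinner y (Q b)" for a b
      by (simp add: bounded_clinear_add[OF assms] cinner_add_right)
    moreover have "cinner y (Q (c *\<^sub>C a)) = c * cinner y (Q a)" for c a
      by (simp add: bounded_clinear_scaleC[OF assms] cinner_scaleC_right)
    ultimately show ?thesis
      using complex_Riesz_representation[of "\<lambda>x. cinner y (Q x)" "norm y * K"] by metis
  qed
  then obtain S where S: "\<And>x y. cinner y (Q x) = cinner (S y) x" by metis
  have adj: "cinner (Q x) y = cinner x (S y)" for x y
    using cinner_commute[of "Q x" y] cinner_commute[of x "S y"] S[where x = x and y = y] by simp
  have "S' = S" if "\<forall>x y. cinner (Q x) y = cinner x (S' y)" for S'
  proof
    fix y
    have "cinner (S' y - S y) (S' y - S y) = 0"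
      using that adj by (simp add: cinner_diff_right)
    thus "S' y = S y" by (simp add: cinner_eq_zero_iff)
  qed
  hence "cadjoint Q = S"
    unfolding cadjoint_def using adj by (intro the_equality) auto
  thus ?thesis using adj by simp
qed

section \<open>Projections compatible with a positive operator\<close>

lemma anorm_le_iff:
  assumes "positive_op A"
  shows "anorm A a \<le> anorm A b \<longleftrightarrow> Re (cinner (A a) a) \<le> Re (cinner (A b) b)"
proof -
  have "0 \<le> Re (cinner (A z) z)" for z
    using assms unfolding positive_op_def by (auto simp: less_eq_complex_def)
  thus ?thesis unfolding anorm_def by simp
qed

locale A_compatible_projection =
  fixes A Q :: "'a::chilbert_space \<Rightarrow> 'a"
  assumes positive: "positive_op A"
    and bounded: "bounded_clinear Q"
    and idempotent: "Q \<circ> Q = Q"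
    and A_selfadjoint: "A \<circ> Q = cadjoint Q \<circ> A"
begin

lemma A_bounded: "bounded_clinear A"
  using positive unfolding positive_op_def by blast

lemma A_nonneg: "0 \<le> cinner (A z) z"
  using positive unfolding positive_op_def by blast

lemma Q_idem [simp]: "Q (Q x) = Q x"
  using idempotent by (metis comp_apply)

lemma fixed_iff_in_range: "Q s = s \<longleftrightarrow> s \<in> range Q"
  by (metis Q_idem rangeE rangeI)

lemma diff_in_range: "a \<in> range Q \<Longrightarrow> b \<in> range Q \<Longrightarrow> a - b \<in> range Q"
  by (metis bounded bounded_clinear_diff fixed_iff_in_range)

lemma scaleC_in_range: "a \<in> range Q \<Longrightarrow> c *\<^sub>C a \<in> range Q"
  by (metis bounded bounded_clinear_scaleC fixed_iff_in_range)

lemma cinner_A_Q: "cinner (A (Q x)) z = cinner (A x) (Q z)"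
  using A_selfadjoint cinner_cadjoint[OF bounded, of z "A x"]
  by (metis cinner_commute comp_apply)

lemma A_Pythagoras:
  assumes "s \<in> range Q"
  shows "cinner (A (w - Q w + s)) (w - Q w + s) = cinner (A (w - Q w)) (w - Q w) + cinner (A s) s"
proof -
  have Qs: "Q s = s" using assms fixed_iff_in_range by blast
  have "cinner (A (w - Q w)) s = 0"
    using cinner_A_Q[of w s] by (simp add: bounded_clinear_diff[OF A_bounded] cinner_diff_left Qs)
  moreover have "cinner (A s) (w - Q w) = 0"
    using cinner_A_Q[of s "w - Q w"] by (simp add: bounded_clinear_diff[OF bounded] Qs)
  ultimately show ?thesis
    by (simp add: bounded_clinear_add[OF A_bounded] cinner_add_left cinner_add_right)
qed

lemma anorm_residual_le:
  assumes "s \<in> range Q"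
  shows "anorm A (w - Q w) \<le> anorm A (w - s)"
proof -
  have "cinner (A (w - s)) (w - s) = cinner (A (w - Q w)) (w - Q w) + cinner (A (Q w - s)) (Q w - s)"
    using A_Pythagoras[OF diff_in_range[OF rangeI[of Q w] assms], of w] by simp
  moreover have "0 \<le> Re (cinner (A (Q w - s)) (Q w - s))"
    using A_nonneg by (simp add: less_eq_complex_def)
  ultimately show ?thesis using anorm_le_iff[OF positive] by simp
qed

lemma A_null_if_anorm_le_residual:
  assumes "s \<in> range Q" "anorm A (y - s) \<le> anorm A (y - Q y)"
  shows "cinner (A (Q y - s)) (Q y - s) = 0"
proof -
  have "Re (cinner (A (Q y - s)) (Q y - s)) \<le> 0"
    using A_Pythagoras[OF diff_in_range[OF rangeI[of Q y] assms(1)], of y] assms(2) anorm_le_iff[OF positive]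
    by simp
  thus ?thesis using A_nonneg[of "Q y - s"] by (simp add: less_eq_complex_def complex_eq_iff)
qed

lemma minus_rank_one_in_PiA:
  assumes "t \<in> range Q" "cinner (A t) t = 0"
  shows "(\<lambda>w. Q w - cinner z w *\<^sub>C t) \<in> PiA A (range Q)"
  unfolding PiA_def
proof (intro CollectI conjI allI impI bounded_clinear_minus_rank_one[OF bounded])
  show "range (\<lambda>w. Q w - cinner z w *\<^sub>C t) \<subseteq> range Q"
    using diff_in_range scaleC_in_range assms(1) by blast
  fix w s
  assume "s \<in> range Q"
  have eq: "w - (Q w - cinner z w *\<^sub>C t) = w - Q w + cinner z w *\<^sub>C t"
    by simp
  have "cinner (A (c *\<^sub>C t)) (c *\<^sub>C t) = 0" for c
    by (simp add: bounded_clinear_scaleC[OF A_bounded] cinner_scaleC_left cinner_scaleC_right assms(2))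
  hence "anorm A (w - (Q w - cinner z w *\<^sub>C t)) = anorm A (w - Q w)"
    using A_Pythagoras[OF scaleC_in_range[OF assms(1)], of w "cinner z w"]
    unfolding eq anorm_def by simp
  thus "anorm A (w - (Q w - cinner z w *\<^sub>C t)) \<le> anorm A (w - s)"
    using anorm_residual_le[OF \<open>s \<in> range Q\<close>] by simp
qed

end

theorem mainTheorem12:
  fixes A B :: "'a::chilbert_space \<Rightarrow> 'a" and y u :: 'a
  assumes "separable_type TYPE('a)"
    and "positive_op A"
    and "bounded_clinear B"
    and "closed (range B)"
    and "compatible A (range B)"
    and "y \<noteq> 0"
  shows "A_least_squares A B y u \<longleftrightarrow> (\<exists>T \<in> PiA A (range B). B u = T y)"
proof
  assume "\<exists>T \<in> PiA A (range B). B u = T y"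
  thus "A_least_squares A B y u"
    unfolding A_least_squares_def PiA_def by auto
next
  assume least_squares: "A_least_squares A B y u"
  obtain Q where "A_compatible_projection A Q" and range_Q: "range Q = range B"
    using assms(2,5) unfolding compatible_def A_compatible_projection_def by blast
  interpret A_compatible_projection A Q by fact
  obtain x where "Q y = B x" using range_Q by (metis rangeE rangeI)
  hence "anorm A (y - B u) \<le> anorm A (y - Q y)"
    using least_squares unfolding A_least_squares_def by simp
  hence null: "cinner (A (Q y - B u)) (Q y - B u) = 0"
    using A_null_if_anorm_le_residual range_Q by blast
  define z where "z = cnj (inverse (cinner y y)) *\<^sub>C y"
  have "cinner y y \<noteq> 0" using \<open>y \<noteq> 0\<close> cinner_eq_zero_iff by blast
  hence "cinner z y = 1" by (simp add: z_def cinner_scaleC_left)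
  define t where "t = Q y - B u"
  have "t \<in> range Q" unfolding t_def using range_Q by (intro diff_in_range) auto
  hence "(\<lambda>w. Q w - cinner z w *\<^sub>C t) \<in> PiA A (range B)"
    using minus_rank_one_in_PiA null range_Q by (simp add: t_def)
  moreover have "B u = Q y - cinner z y *\<^sub>C t"
    using \<open>cinner z y = 1\<close> by (simp add: t_def scaleC_one)
  ultimately show "\<exists>T \<in> PiA A (range B). B u = T y"
    by (intro bexI[where x = "\<lambda>w. Q w - cinner z w *\<^sub>C t"]) simp_all
qed

end
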